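(* Let $k$ be an algebraically closed field of characteristic $0$, $n\ge1$, $d\ge2$, let $f\in\mathrm{End}^1_d$ and $F=s_n(f)$ its $n$-th symmetric power. For $P\in\mathbb{P}^1$ let $H_P=\{\Phi\in\mathcal{F}^1_n:\Phi(P)=0\}$. Then the hyperplane $H_P$ is improper under $F$ if and only if $P$ is preperiodic under $f$.
   Context: $\mathcal{F}^1_n\cong\mathbb{P}^n$ is the projective space of binary forms of degree $n$; the Vieta map $\eta:(\mathbb{P}^1)^n\to\mathcal{F}^1_n$ sends $((a_1:b_1),\dots,(a_n:b_n))$ to $\prod_i (b_i x - a_i y)$. The $n$-th symmetric power of $f$ is the unique degree-$d$ endomorphism $F$ of $\mathcal{F}^1_n$ with $F(\eta(P_1,\dots,P_n))=\eta(f(P_1),\dots,f(P_n))$ for all $P_i\in\mathbb{P}^1$. A hypersurface $H\subset\mathbb{P}^n$ is improper under $F$ if for every irreducible component $Z$ of $H$ there exist integers $0\le i_0<\dots<i_n$ with $F^{i_0}(Z)\cap\dots\cap F^{i_n}(Z)\neq\varnothing$. $P$ is preperiodic under $f$ if $f^s(P)=f^t(P)$ for some distinct $s,t\ge0$. *)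

theory Defs
  imports "HOL-Computational_Algebra.Polynomial"
begin

definition alg_closed :: "'a::field itself \<Rightarrow> bool" where
  "alg_closed _ \<longleftrightarrow> (\<forall>p::'a poly. degree p \<noteq> 0 \<longrightarrow> (\<exists>x. poly p x = 0))"

text \<open>A binary form of degree m is encoded by a univariate polynomial phi of
  degree at most m (phi(t) = Phi(t,1)); its value at (a,b) is
  sum_i coeff phi i * a^i * b^(m-i).\<close>
definition heval :: "nat \<Rightarrow> 'a::comm_ring_1 poly \<Rightarrow> 'a \<times> 'a \<Rightarrow> 'a" where
  "heval m \<phi> P = (\<Sum>i\<le>m. coeff \<phi> i * fst P ^ i * snd P ^ (m - i))"

definition fmap :: "nat \<Rightarrow> 'a::comm_ring_1 poly \<Rightarrow> 'a poly \<Rightarrow> 'a \<times> 'a \<Rightarrow> 'a \<times> 'a" where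
  "fmap d A B P = (heval d A P, heval d B P)"

definition is_endo :: "nat \<Rightarrow> 'a::field poly \<Rightarrow> 'a poly \<Rightarrow> bool" where
  "is_endo d A B \<longleftrightarrow> degree A \<le> d \<and> degree B \<le> d \<and>
     (\<forall>P. P \<noteq> (0,0) \<longrightarrow> fmap d A B P \<noteq> (0,0))"

text \<open>Point of P^n = F^1_n: class of a nonzero form up to scaling.\<close>
definition pcls :: "'a::field poly \<Rightarrow> 'a poly set" where
  "pcls \<phi> = {smult c \<phi> | c. c \<noteq> 0}"

definition vieta :: "nat \<Rightarrow> (nat \<Rightarrow> 'a \<times> 'a) \<Rightarrow> 'a::field poly" where
  "vieta n p = (\<Prod>i<n. [:- fst (p i), snd (p i):])"

text \<open>Image of a set of points of F^1_n under the n-th symmetric power of g,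
  determined by F(eta(P_1..P_n)) = eta(g P_1, .., g P_n).\<close>
definition sym_img :: "nat \<Rightarrow> ('a \<times> 'a \<Rightarrow> 'a \<times> 'a) \<Rightarrow> 'a::field poly set set \<Rightarrow> 'a poly set set" where
  "sym_img n g S = {pcls (vieta n (g \<circ> p)) | p. (\<forall>i<n. p i \<noteq> (0,0)) \<and> pcls (vieta n p) \<in> S}"

definition hyperplane_at :: "nat \<Rightarrow> 'a::field \<times> 'a \<Rightarrow> 'a poly set set" where
  "hyperplane_at n P = {pcls \<phi> | \<phi>. \<phi> \<noteq> 0 \<and> degree \<phi> \<le> n \<and> heval n \<phi> P = 0}"

text \<open>Improperness for an irreducible hypersurface Z (its only component is Z itself).\<close>
definition improper_irred :: "nat \<Rightarrow> ('x set \<Rightarrow> 'x set) \<Rightarrow> 'x set \<Rightarrow> bool" where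
  "improper_irred n Fimg Z \<longleftrightarrow>
     (\<exists>\<iota>::nat \<Rightarrow> nat. strict_mono_on {0..n} \<iota> \<and> (\<Inter>j\<in>{0..n}. (Fimg ^^ \<iota> j) Z) \<noteq> {})"

definition pequiv :: "'a::field \<times> 'a \<Rightarrow> 'a \<times> 'a \<Rightarrow> bool" where
  "pequiv P Q \<longleftrightarrow> fst P * snd Q = snd P * fst Q"

definition preperiodic :: "('a::field \<times> 'a \<Rightarrow> 'a \<times> 'a) \<Rightarrow> 'a \<times> 'a \<Rightarrow> bool" where
  "preperiodic g P \<longleftrightarrow> (\<exists>s t. s \<noteq> t \<and> pequiv ((g ^^ s) P) ((g ^^ t) P))"

end

theory Submission
  imports Defs
begin

text \<open>A nonzero binary form of degree at most n vanishes at no more than n points of P^1.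
  Since F maps H_Q into H_f(Q), a point of F^i_0(H_P) \<inter> ... \<inter> F^i_n(H_P) is a form vanishing
  at f^i_0(P), ..., f^i_n(P); two of these points coincide, so P is preperiodic. Conversely, if
  f^s(P) = f^t(P) with s < t, then \<eta>(P, f P, ..., f^(n-1) P) lies in H_P, and by periodicity of
  the orbit its image under F^(s + j(t-s)) is \<eta>(f^s P, ..., f^(s+n-1) P) for every j.\<close>

section \<open>Points of the projective line\<close>

lemma pequiv_refl: "pequiv P P"
  by (simp add: pequiv_def mult.commute)

lemma pequiv_sym: "pequiv P Q \<Longrightarrow> pequiv Q P"
  by (simp add: pequiv_def mult.commute)

lemma pequiv_trans:
  fixes P Q R :: "'a::field \<times> 'a"
  assumes "pequiv P Q" "pequiv Q R" "Q \<noteq> (0,0)"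
  shows "pequiv P R"
proof -
  obtain a b where Q: "Q = (a, b)" by fastforce
  have PQ: "fst P * b = snd P * a" and QR: "a * snd R = b * fst R"
    using assms(1,2) by (simp_all add: pequiv_def Q)
  have "a * (fst P * snd R) = a * (snd P * fst R)"
    using PQ QR by algebra
  moreover have "b * (fst P * snd R) = b * (snd P * fst R)"
    using PQ QR by algebra
  ultimately show ?thesis using assms(3) by (auto simp: pequiv_def Q)
qed

lemma pequiv_imp_scaled:
  fixes P Q :: "'a::field \<times> 'a"
  assumes "pequiv P Q" "P \<noteq> (0,0)" "Q \<noteq> (0,0)"
  obtains c where "c \<noteq> 0" "P = (c * fst Q, c * snd Q)"
proof -
  obtain a b x y where P: "P = (a,b)" and Q: "Q = (x,y)" by fastforce
  have e: "a * y = b * x" using assms(1) by (simp add: pequiv_def P Q)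
  show ?thesis
  proof (cases "x = 0")
    case True
    with assms Q e have "y \<noteq> 0" "a = 0" by auto
    with assms(2) P have "b \<noteq> 0" by simp
    with \<open>y \<noteq> 0\<close> \<open>a = 0\<close> True show ?thesis by (intro that[of "b/y"]) (simp_all add: P Q)
  next
    case False
    with e assms(2) P have "a \<noteq> 0" by auto
    moreover have "b = (a/x) * y" using e False by (simp add: field_simps)
    ultimately show ?thesis using False by (intro that[of "a/x"]) (simp_all add: P Q)
  qed
qed

definition proj_map :: "('a::field \<times> 'a \<Rightarrow> 'a \<times> 'a) \<Rightarrow> bool" where
  "proj_map g \<longleftrightarrow> (\<forall>P. P \<noteq> (0,0) \<longrightarrow> g P \<noteq> (0,0)) \<and>
     (\<forall>P Q. P \<noteq> (0,0) \<longrightarrow> Q \<noteq> (0,0) \<longrightarrow> pequiv P Q \<longrightarrow> pequiv (g P) (g Q))"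

lemma proj_map_nonzero: "proj_map g \<Longrightarrow> P \<noteq> (0,0) \<Longrightarrow> g P \<noteq> (0,0)"
  unfolding proj_map_def by blast

lemma proj_map_pequiv:
  "proj_map g \<Longrightarrow> pequiv P Q \<Longrightarrow> P \<noteq> (0,0) \<Longrightarrow> Q \<noteq> (0,0) \<Longrightarrow> pequiv (g P) (g Q)"
  unfolding proj_map_def by blast

lemma proj_map_funpow:
  assumes "proj_map g" shows "proj_map (g ^^ m)"
proof (induction m)
  case 0 show ?case unfolding proj_map_def funpow_0 by blast
next
  case (Suc m)
  show ?case unfolding proj_map_def funpow.simps(2) o_apply
    by (intro conjI allI impI; meson proj_map_nonzero proj_map_pequiv assms Suc.IH)
qed

lemma funpow_pequiv_periodic:
  assumes g: "proj_map g" and P: "P \<noteq> (0,0)"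
    and st: "pequiv ((g ^^ s) P) ((g ^^ t) P)" and "s \<le> t" "s \<le> x"
  shows "pequiv ((g ^^ x) P) ((g ^^ (x + k * (t - s))) P)"
proof (induction k)
  case 0 show ?case by (simp add: pequiv_refl)
next
  case (Suc k)
  define a where "a = x + k * (t - s) - s"
  have orbit_nonzero: "(g ^^ m) P \<noteq> (0,0)" for m
    using proj_map_nonzero[OF proj_map_funpow[OF g] P] .
  have "pequiv ((g ^^ (a + s)) P) ((g ^^ (a + t)) P)"
    using proj_map_pequiv[OF proj_map_funpow[OF g] st orbit_nonzero orbit_nonzero]
    by (simp add: funpow_add)
  moreover have "a + s = x + k * (t - s)" "a + t = x + Suc k * (t - s)"
    using \<open>s \<le> t\<close> \<open>s \<le> x\<close> by (simp_all add: a_def)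
  ultimately have "pequiv ((g ^^ (x + k * (t - s))) P) ((g ^^ (x + Suc k * (t - s))) P)"
    by (simp only:)
  then show ?case by (rule pequiv_trans[OF Suc.IH _ orbit_nonzero])
qed

section \<open>Binary forms\<close>

lemma heval_smult: "heval n (smult c \<phi>) Q = c * heval n \<phi> Q"
  by (simp add: heval_def sum_distrib_left mult.assoc)

lemma heval_homogeneous:
  fixes A :: "'a::comm_ring_1 poly"
  shows "heval d A (c * x, c * y) = c ^ d * heval d A (x, y)"
  unfolding heval_def fst_conv snd_conv sum_distrib_left
proof (rule sum.cong)
  fix i assume "i \<in> {..d}"
  hence "c ^ d = c ^ i * c ^ (d - i)" by (simp flip: power_add)
  thus "coeff A i * (c * x) ^ i * (c * y) ^ (d - i) = c ^ d * (coeff A i * x ^ i * y ^ (d - i))"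
    by (simp add: power_mult_distrib)
qed simp

lemma heval_dehomogenize:
  fixes \<phi> :: "'a::field poly"
  assumes "degree \<phi> \<le> n" "y \<noteq> 0"
  shows "heval n \<phi> (x, y) = y ^ n * poly \<phi> (x / y)"
proof -
  have "poly \<phi> (x / y) = (\<Sum>i\<le>n. coeff \<phi> i * (x / y) ^ i)"
    using assms(1) unfolding poly_altdef
    by (intro sum.mono_neutral_left) (auto simp: coeff_eq_0)
  hence "y ^ n * poly \<phi> (x / y) = (\<Sum>i\<le>n. coeff \<phi> i * (y ^ n * (x / y) ^ i))"
    by (simp add: sum_distrib_left algebra_simps)
  also have "\<dots> = (\<Sum>i\<le>n. coeff \<phi> i * x ^ i * y ^ (n - i))"
  proof (rule sum.cong)
    fix i assume "i \<in> {..n}"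
    hence "y ^ n = y ^ i * y ^ (n - i)" by (simp flip: power_add)
    thus "coeff \<phi> i * (y ^ n * (x / y) ^ i) = coeff \<phi> i * x ^ i * y ^ (n - i)"
      using assms(2) by (simp add: power_divide field_simps)
  qed simp
  finally show ?thesis by (simp add: heval_def)
qed

lemma heval_at_infinity: "heval n \<phi> (x, 0) = coeff \<phi> n * x ^ n"
proof -
  have "heval n \<phi> (x, 0) = (\<Sum>i\<in>{n}. coeff \<phi> i * x ^ i * 0 ^ (n - i))"
    unfolding heval_def fst_conv snd_conv by (rule sum.mono_neutral_right) (auto simp: power_0_left)
  thus ?thesis by simp
qed

lemma is_endo_proj_map:
  assumes "is_endo d A B" shows "proj_map (fmap d A B)"
  unfolding proj_map_def
proof (intro conjI allI impI)
  show "fmap d A B P \<noteq> (0,0)" if "P \<noteq> (0,0)" for P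
    using assms that by (cases P) (auto simp: is_endo_def)
  show "pequiv (fmap d A B P) (fmap d A B Q)"
    if PQ: "P \<noteq> (0,0)" "Q \<noteq> (0,0)" "pequiv P Q" for P Q
  proof -
    obtain c where "P = (c * fst Q, c * snd Q)" using pequiv_imp_scaled[OF PQ(3,1,2)] by blast
    hence "fmap d A B P = (c ^ d * fst (fmap d A B Q), c ^ d * snd (fmap d A B Q))"
      by (simp add: fmap_def heval_homogeneous)
    thus ?thesis by (simp add: pequiv_def)
  qed
qed

lemma card_affine_zeros_le_degree:
  fixes \<phi> :: "'a::field poly" and Q :: "nat \<Rightarrow> 'a \<times> 'a"
  assumes "\<phi> \<noteq> 0" "degree \<phi> \<le> n" "finite J"
    and zeros: "\<forall>j\<in>J. snd (Q j) \<noteq> 0 \<and> heval n \<phi> (Q j) = 0"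
    and distinct: "\<forall>j\<in>J. \<forall>k\<in>J. pequiv (Q j) (Q k) \<longrightarrow> j = k"
  shows "card J \<le> degree \<phi>"
proof -
  define h where "h j = fst (Q j) / snd (Q j)" for j
  have "inj_on h J"
    by (rule inj_onI) (use zeros distinct in \<open>auto simp: h_def pequiv_def field_simps\<close>)
  moreover have "h ` J \<subseteq> {z. poly \<phi> z = 0}"
  proof
    fix z assume "z \<in> h ` J"
    then obtain j where j: "j \<in> J" "z = h j" by blast
    obtain x y where Qj: "Q j = (x, y)" by fastforce
    with zeros j have "y \<noteq> 0" "heval n \<phi> (x, y) = 0" by auto
    with heval_dehomogenize[OF assms(2)] show "z \<in> {z. poly \<phi> z = 0}"
      by (simp add: j h_def Qj)
  qed
  ultimately have "card J \<le> card {z. poly \<phi> z = 0}"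
    by (metis card_image card_mono poly_roots_finite[OF assms(1)])
  also have "\<dots> \<le> degree \<phi>" by (rule card_poly_roots_bound[OF assms(1)])
  finally show ?thesis .
qed

lemma binary_form_zeros_pigeonhole:
  fixes \<phi> :: "'a::field poly" and Q :: "nat \<Rightarrow> 'a \<times> 'a"
  assumes "\<phi> \<noteq> 0" "degree \<phi> \<le> n"
    and zeros: "\<forall>j\<le>n. Q j \<noteq> (0,0) \<and> heval n \<phi> (Q j) = 0"
  shows "\<exists>j\<le>n. \<exists>k\<le>n. j \<noteq> k \<and> pequiv (Q j) (Q k)"
proof (rule ccontr)
  assume "\<not> ?thesis"
  hence distinct: "\<forall>j\<le>n. \<forall>k\<le>n. pequiv (Q j) (Q k) \<longrightarrow> j = k" by blast
  define J where "J = {j. j \<le> n \<and> snd (Q j) \<noteq> 0}"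
  have card_J: "card J \<le> degree \<phi>"
    by (rule card_affine_zeros_le_degree[OF assms(1,2)]) (use zeros distinct in \<open>auto simp: J_def\<close>)
  show False
  proof (cases "J = {..n}")
    case True with card_J assms(2) show False by simp
  next
    case False
    then obtain j0 where "j0 \<le> n" "snd (Q j0) = 0" by (auto simp: J_def)
    then obtain x where j0: "j0 \<le> n" "Q j0 = (x, 0)" by (metis prod.collapse)
    with zeros have "x \<noteq> 0" "coeff \<phi> n = 0" by (auto simp: heval_at_infinity)
    with assms(1,2) have "degree \<phi> < n" by (metis le_neq_implies_less leading_coeff_0_iff)
    have "{..n} - {j0} \<subseteq> J"
    proof
      fix k assume k: "k \<in> {..n} - {j0}"
      show "k \<in> J"
      proof (rule ccontr)
        assume "k \<notin> J"
        with k have "snd (Q k) = 0" by (simp add: J_def)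
        \<comment> \<open>all points at infinity coincide\<close>
        with j0 have "pequiv (Q k) (Q j0)" by (simp add: pequiv_def)
        with distinct k j0(1) show False by auto
      qed
    qed
    hence "card ({..n} - {j0}) \<le> card J" by (rule card_mono[rotated]) (simp add: J_def)
    with j0(1) have "n \<le> card J" by simp
    with card_J \<open>degree \<phi> < n\<close> show False by simp
  qed
qed

section \<open>The Vieta map\<close>

lemma vieta_Suc: "vieta (Suc n) r = vieta n r * [:- fst (r n), snd (r n):]"
  by (simp add: vieta_def)

lemma poly_vieta: "poly (vieta n r) z = (\<Prod>i<n. snd (r i) * z - fst (r i))"
  by (simp add: vieta_def poly_prod algebra_simps)

lemma degree_vieta: "degree (vieta n r) \<le> n"
proof (induction n)
  case (Suc n)
  have "degree (vieta (Suc n) r) \<le> degree (vieta n r) + degree [:- fst (r n), snd (r n):]"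
    unfolding vieta_Suc by (rule degree_mult_le)
  also have "\<dots> \<le> Suc n" using Suc by simp
  finally show ?case .
qed (simp add: vieta_def)

lemma coeff_vieta_top: "coeff (vieta n r) n = (\<Prod>i<n. snd (r i))"
proof (induction n)
  case (Suc n)
  have "coeff (vieta n r) (Suc n) = 0" using degree_vieta[of n r] by (simp add: coeff_eq_0)
  thus ?case using Suc by (simp add: vieta_Suc mult_pCons_right coeff_pCons)
qed (simp add: vieta_def)

lemma vieta_nonzero: "(\<And>i. i < n \<Longrightarrow> r i \<noteq> (0,0)) \<Longrightarrow> vieta n r \<noteq> 0"
  unfolding vieta_def by (subst prod_zero_iff) (auto, metis prod.collapse)

lemma heval_vieta_eq_0_iff:
  fixes Q :: "'a::field \<times> 'a"
  assumes "Q \<noteq> (0,0)"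
  shows "heval n (vieta n r) Q = 0 \<longleftrightarrow> (\<exists>j<n. pequiv (r j) Q)"
proof -
  obtain x y where Q: "Q = (x, y)" by fastforce
  show ?thesis
  proof (cases "y = 0")
    case True
    with assms show ?thesis by (auto simp: Q heval_at_infinity coeff_vieta_top pequiv_def)
  next
    case False
    have "heval n (vieta n r) Q = y ^ n * (\<Prod>i<n. snd (r i) * (x / y) - fst (r i))"
      using False by (simp add: Q heval_dehomogenize degree_vieta poly_vieta)
    moreover have "snd (r i) * (x / y) - fst (r i) = 0 \<longleftrightarrow> pequiv (r i) Q" for i
      using False by (auto simp: pequiv_def Q field_simps)
    ultimately show ?thesis using False by auto
  qed
qed

lemma vieta_pequiv_smult:
  assumes "\<And>i. i < n \<Longrightarrow> pequiv (a i) (b i) \<and> a i \<noteq> (0,0) \<and> b i \<noteq> (0,0)"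
  shows "\<exists>c. c \<noteq> 0 \<and> vieta n a = smult c (vieta n b)"
  using assms
proof (induction n)
  case (Suc n)
  then obtain c where c: "c \<noteq> 0" "vieta n a = smult c (vieta n b)" by auto
  obtain e where e: "e \<noteq> 0" "a n = (e * fst (b n), e * snd (b n))"
    using pequiv_imp_scaled Suc.prems by blast
  have "vieta (Suc n) a = smult c (vieta n b) * smult e [:- fst (b n), snd (b n):]"
    using e(2) by (simp add: vieta_Suc c(2))
  also have "\<dots> = smult (c * e) (vieta (Suc n) b)"
    by (simp only: vieta_Suc mult_smult_left mult_smult_right smult_smult mult.commute)
  finally show ?case using c e by (intro exI[of _ "c * e"]) simp
qed (intro exI[of _ 1], simp add: vieta_def)

section \<open>Hyperplanes under the symmetric power\<close>

lemma mem_pcls: "\<psi> \<in> pcls \<phi> \<longleftrightarrow> (\<exists>c. c \<noteq> 0 \<and> \<psi> = smult c \<phi>)"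
  unfolding pcls_def by blast

lemma pcls_smult:
  assumes "c \<noteq> 0" shows "pcls (smult c \<phi>) = pcls \<phi>"
proof (intro set_eqI iffI)
  fix \<psi> assume "\<psi> \<in> pcls (smult c \<phi>)"
  then obtain x where "x \<noteq> 0" "\<psi> = smult (x * c) \<phi>" unfolding mem_pcls by auto
  with assms show "\<psi> \<in> pcls \<phi>" unfolding mem_pcls by (intro exI[of _ "x * c"]) simp
next
  fix \<psi> assume "\<psi> \<in> pcls \<phi>"
  then obtain x where "x \<noteq> 0" "\<psi> = smult (x / c) (smult c \<phi>)"
    using assms unfolding mem_pcls by auto
  with assms show "\<psi> \<in> pcls (smult c \<phi>)" unfolding mem_pcls by (intro exI[of _ "x / c"]) simp
qed

lemma pcls_eq_imp_smult:
  assumes "pcls \<phi> = pcls \<psi>" shows "\<exists>c. \<phi> = smult c \<psi>"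
proof -
  have "\<phi> \<in> pcls \<phi>" unfolding mem_pcls by (intro exI[of _ 1]) simp
  thus ?thesis unfolding assms mem_pcls by blast
qed

lemma mem_hyperplane_at:
  "X \<in> hyperplane_at n P \<longleftrightarrow> (\<exists>\<phi>. X = pcls \<phi> \<and> \<phi> \<noteq> 0 \<and> degree \<phi> \<le> n \<and> heval n \<phi> P = 0)"
  unfolding hyperplane_at_def by blast

lemma hyperplane_at_pcls_imp_eq_0:
  assumes "pcls \<phi> \<in> hyperplane_at n P" shows "heval n \<phi> P = 0"
proof -
  from assms obtain \<psi> where "pcls \<phi> = pcls \<psi>" "heval n \<psi> P = 0"
    unfolding mem_hyperplane_at by blast
  with pcls_eq_imp_smult show ?thesis by (metis heval_smult mult_zero_right)
qed

lemma sym_img_hyperplane_subset: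
  assumes g: "proj_map g" and Q: "Q \<noteq> (0,0)" and S: "S \<subseteq> hyperplane_at n Q"
  shows "sym_img n g S \<subseteq> hyperplane_at n (g Q)"
proof
  fix X assume "X \<in> sym_img n g S"
  then obtain p where X: "X = pcls (vieta n (g \<circ> p))"
    and p: "\<forall>i<n. p i \<noteq> (0,0)" and "pcls (vieta n p) \<in> S"
    unfolding sym_img_def by blast
  with S have "heval n (vieta n p) Q = 0"
    by (blast intro: hyperplane_at_pcls_imp_eq_0)
  then obtain j where "j < n" "pequiv (p j) Q" using heval_vieta_eq_0_iff[OF Q] by blast
  with g p Q have "pequiv ((g \<circ> p) j) (g Q)" by (simp add: proj_map_pequiv)
  with \<open>j < n\<close> have "heval n (vieta n (g \<circ> p)) (g Q) = 0"
    using heval_vieta_eq_0_iff[OF proj_map_nonzero[OF g Q]] by blast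
  moreover have "vieta n (g \<circ> p) \<noteq> 0"
    using p proj_map_nonzero[OF g] by (intro vieta_nonzero) simp
  ultimately show "X \<in> hyperplane_at n (g Q)"
    unfolding mem_hyperplane_at X using degree_vieta by blast
qed

lemma funpow_sym_img_hyperplane_subset:
  assumes g: "proj_map g" and P: "P \<noteq> (0,0)"
  shows "(sym_img n g ^^ i) (hyperplane_at n P) \<subseteq> hyperplane_at n ((g ^^ i) P)"
proof (induction i)
  case (Suc i)
  have "(g ^^ i) P \<noteq> (0,0)" using proj_map_nonzero[OF proj_map_funpow[OF g] P] .
  with sym_img_hyperplane_subset[OF g this Suc] show ?case by simp
qed simp

lemma vieta_funpow_mem_funpow_sym_img:
  assumes g: "proj_map g" and r: "\<forall>j<n. r j \<noteq> (0,0)" and X: "pcls (vieta n r) \<in> S"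
  shows "pcls (vieta n ((g ^^ i) \<circ> r)) \<in> (sym_img n g ^^ i) S"
proof (induction i)
  case (Suc i)
  have "\<forall>j<n. ((g ^^ i) \<circ> r) j \<noteq> (0,0)"
    using r proj_map_nonzero[OF proj_map_funpow[OF g]] by simp
  with Suc.IH have "pcls (vieta n (g \<circ> ((g ^^ i) \<circ> r))) \<in> sym_img n g ((sym_img n g ^^ i) S)"
    unfolding sym_img_def by blast
  thus ?case by (simp add: comp_def)
qed (use X in simp)

section \<open>Improper hyperplanes and preperiodic points\<close>

lemma improper_hyperplane_imp_preperiodic:
  assumes g: "proj_map g" and P: "P \<noteq> (0,0)"
    and "improper_irred n (sym_img n g) (hyperplane_at n P)"
  shows "preperiodic g P"
proof -
  obtain \<iota> where \<iota>: "strict_mono_on {0..n} \<iota>"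
    and "(\<Inter>j\<in>{0..n}. (sym_img n g ^^ \<iota> j) (hyperplane_at n P)) \<noteq> {}"
    using assms(3) unfolding improper_irred_def by blast
  then obtain X where X: "X \<in> (\<Inter>j\<in>{0..n}. (sym_img n g ^^ \<iota> j) (hyperplane_at n P))"
    by blast
  have X_hyp: "X \<in> hyperplane_at n ((g ^^ \<iota> j) P)" if "j \<le> n" for j
  proof -
    from that X have "X \<in> (sym_img n g ^^ \<iota> j) (hyperplane_at n P)" by simp
    then show ?thesis using funpow_sym_img_hyperplane_subset[OF g P] by blast
  qed
  obtain \<phi> where \<phi>: "X = pcls \<phi>" "\<phi> \<noteq> 0" "degree \<phi> \<le> n"
    using X_hyp[of 0] unfolding mem_hyperplane_at by blast
  have "heval n \<phi> ((g ^^ \<iota> j) P) = 0" if "j \<le> n" for j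
    using X_hyp[OF that] unfolding \<phi>(1) by (rule hyperplane_at_pcls_imp_eq_0)
  hence zeros: "\<forall>j\<le>n. (g ^^ \<iota> j) P \<noteq> (0,0) \<and> heval n \<phi> ((g ^^ \<iota> j) P) = 0"
    using proj_map_nonzero[OF proj_map_funpow[OF g] P] by simp
  from binary_form_zeros_pigeonhole[OF \<phi>(2,3) zeros]
  obtain j k where jk: "j \<le> n" "k \<le> n" "j \<noteq> k"
    and "pequiv ((g ^^ \<iota> j) P) ((g ^^ \<iota> k) P)" by blast
  moreover have "\<iota> j \<noteq> \<iota> k"
    using inj_onD[OF strict_mono_on_imp_inj_on[OF \<iota>]] jk by auto
  ultimately show ?thesis unfolding preperiodic_def by blast
qed

lemma preperiodic_imp_improper_hyperplane:
  assumes g: "proj_map g" and P: "P \<noteq> (0,0)" and "n \<ge> 1" and "preperiodic g P"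
  shows "improper_irred n (sym_img n g) (hyperplane_at n P)"
proof -
  define orb where "orb m = (g ^^ m) P" for m
  have orb_nonzero: "orb m \<noteq> (0,0)" for m
    unfolding orb_def using proj_map_nonzero[OF proj_map_funpow[OF g] P] .
  obtain s0 t0 where "s0 \<noteq> t0" "pequiv (orb s0) (orb t0)"
    using assms(4) unfolding preperiodic_def orb_def by blast
  then obtain s t where "s < t" and st: "pequiv (orb s) (orb t)"
    by (metis linorder_neqE_nat pequiv_sym)
  define \<iota> where "\<iota> j = s + j * (t - s)" for j
  have "strict_mono_on {0..n} \<iota>"
    using \<open>s < t\<close> by (intro strict_mono_onI) (simp add: \<iota>_def)
  have "pequiv (orb 0) P" by (simp add: orb_def pequiv_refl)
  with \<open>n \<ge> 1\<close> have "heval n (vieta n orb) P = 0"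
    using heval_vieta_eq_0_iff[OF P, of n orb] by auto
  hence "pcls (vieta n orb) \<in> hyperplane_at n P"
    unfolding mem_hyperplane_at
    by (intro exI[of _ "vieta n orb"]) (simp add: vieta_nonzero orb_nonzero degree_vieta)
  hence in_img: "pcls (vieta n ((g ^^ \<iota> j) \<circ> orb)) \<in> (sym_img n g ^^ \<iota> j) (hyperplane_at n P)" for j
    by (rule vieta_funpow_mem_funpow_sym_img[OF g, rotated]) (simp add: orb_nonzero)
  have same: "pcls (vieta n ((g ^^ \<iota> j) \<circ> orb)) = pcls (vieta n (\<lambda>m. orb (s + m)))" for j
  proof -
    have shift: "((g ^^ \<iota> j) \<circ> orb) m = orb (s + m + j * (t - s))" for m
    proof -
      have "((g ^^ \<iota> j) \<circ> orb) m = orb (\<iota> j + m)" by (simp add: orb_def funpow_add)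
      thus ?thesis by (simp add: \<iota>_def ac_simps)
    qed
    have period: "pequiv (orb (s + m + j * (t - s))) (orb (s + m))" for m
      using funpow_pequiv_periodic[OF g P st[unfolded orb_def], of "s + m" j] \<open>s < t\<close>
      by (simp add: orb_def pequiv_sym)
    obtain c where "c \<noteq> 0" "vieta n ((g ^^ \<iota> j) \<circ> orb) = smult c (vieta n (\<lambda>m. orb (s + m)))"
      using vieta_pequiv_smult[of n "(g ^^ \<iota> j) \<circ> orb" "\<lambda>m. orb (s + m)"]
      by (auto simp only: shift period orb_nonzero simp_thms)
    thus ?thesis by (simp add: pcls_smult)
  qed
  have "pcls (vieta n (\<lambda>m. orb (s + m))) \<in> (\<Inter>j\<in>{0..n}. (sym_img n g ^^ \<iota> j) (hyperplane_at n P))"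
    using in_img by (simp add: same)
  with \<open>strict_mono_on {0..n} \<iota>\<close> show ?thesis
    unfolding improper_irred_def by blast
qed

theorem mainTheorem11:
  fixes A B :: "'k::field_char_0 poly" and n d :: nat and P :: "'k \<times> 'k"
  assumes "alg_closed TYPE('k)"
    and "n \<ge> 1" and "d \<ge> 2"
    and "is_endo d A B"
    and "P \<noteq> (0,0)"
  shows "improper_irred n (sym_img n (fmap d A B)) (hyperplane_at n P)
         \<longleftrightarrow> preperiodic (fmap d A B) P"
  using improper_hyperplane_imp_preperiodic[OF is_endo_proj_map assms(5)]
    preperiodic_imp_improper_hyperplane[OF is_endo_proj_map assms(5,2)] assms(4) by blast

end
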